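(* Let $G=(V,E)$ be a connected, locally finite, nonamenable, transitive graph in which every vertex has degree $d\ge3$. Let $S\subset V$ be nonempty and finite, $p\in(0,1]$, $\mu\in(0,1/2]$, and let $\bm\eta=(\eta_t)_{t\in[0,\mu^{-1}]}$ be an environment path such that, for some $\beta>0$, $$\big|\{e\in\partial_E S:\eta_t(e)=1\text{ for all }t\in[\mu^{-1}-1,\mu^{-1}]\}\big|\ge\beta\,|\partial_E S| .$$ Then $$\Phi^{\bm\eta}_S:=\frac1{|S|}\sum_{x\in S}\sum_{y\in V\setminus S}\mathbb P^{\bm\eta}\big(X_{\mu^{-1}}=y\mid X_0=x\big)\;\ge\;\frac{\beta}{de}\,\Phi(G).$$
   Context: Random walk on dynamical percolation: given $p\in(0,1]$ and $\mu>0$, each edge carries an independent rate-$\mu$ Poisson process of refresh times, at which its state is resampled to open with probability $p$ and closed with probability $1-p$; $\eta_t\in\{0,1\}^E$ is the environment at time $t$. The walker $X_t$ attempts jumps at the times of an independent rate-$1$ Poisson process, choosing a uniformly random neighbor and jumping iff the connecting edge is open at that time. $\mathbb P^{\bm\eta}$ denotes the law of the walk conditionally on the environment path $\bm\eta$. $\partial_E S$ is the set of edges with exactly one endpoint in $S$. Cheeger constant: $\Phi(G):=\inf\{|\partial_E W|/\sum_{v\in W}\deg(v): W\subset V\text{ finite, nonempty}\}$; nonamenable means $\Phi(G)>0$. *)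

theory Defs
  imports "HOL-Analysis.Analysis"
begin

definition degree :: "('v \<Rightarrow> 'v \<Rightarrow> bool) \<Rightarrow> 'v \<Rightarrow> nat" where
  "degree adj v = card {w. adj v w}"

definition edges :: "('v \<Rightarrow> 'v \<Rightarrow> bool) \<Rightarrow> 'v set set" where
  "edges adj = {{x, y} | x y. adj x y}"

definition simple_graph :: "('v \<Rightarrow> 'v \<Rightarrow> bool) \<Rightarrow> bool" where
  "simple_graph adj \<longleftrightarrow> (\<forall>x y. adj x y \<longrightarrow> adj y x) \<and> (\<forall>x. \<not> adj x x)"

definition connected_graph :: "('v \<Rightarrow> 'v \<Rightarrow> bool) \<Rightarrow> bool" where
  "connected_graph adj \<longleftrightarrow> (\<forall>x y. adj\<^sup>*\<^sup>* x y)"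

definition locally_finite :: "('v \<Rightarrow> 'v \<Rightarrow> bool) \<Rightarrow> bool" where
  "locally_finite adj \<longleftrightarrow> (\<forall>v. finite {w. adj v w})"

definition graph_automorphism :: "('v \<Rightarrow> 'v \<Rightarrow> bool) \<Rightarrow> ('v \<Rightarrow> 'v) \<Rightarrow> bool" where
  "graph_automorphism adj f \<longleftrightarrow> bij f \<and> (\<forall>a b. adj a b \<longleftrightarrow> adj (f a) (f b))"

definition vertex_transitive :: "('v \<Rightarrow> 'v \<Rightarrow> bool) \<Rightarrow> bool" where
  "vertex_transitive adj \<longleftrightarrow> (\<forall>x y. \<exists>f. graph_automorphism adj f \<and> f x = y)"

definition edge_boundary :: "('v \<Rightarrow> 'v \<Rightarrow> bool) \<Rightarrow> 'v set \<Rightarrow> 'v set set" where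
  "edge_boundary adj S = {{x, y} | x y. adj x y \<and> x \<in> S \<and> y \<notin> S}"

definition cheeger :: "('v \<Rightarrow> 'v \<Rightarrow> bool) \<Rightarrow> real" where
  "cheeger adj = Inf {real (card (edge_boundary adj W)) / real (\<Sum>v\<in>W. degree adj v) | W.
                        finite W \<and> W \<noteq> {}}"

definition nonamenable :: "('v \<Rightarrow> 'v \<Rightarrow> bool) \<Rightarrow> bool" where
  "nonamenable adj \<longleftrightarrow> cheeger adj > 0"

text \<open>An environment path on [0,T]: eta t e is the state (True = open) of edge e at
  time t. As a path of dynamical percolation, each edge changes state only finitely
  often on [0,T] and is right-continuous (cadlag step function).\<close>
definition env_path :: "('v \<Rightarrow> 'v \<Rightarrow> bool) \<Rightarrow> real \<Rightarrow> (real \<Rightarrow> 'v set \<Rightarrow> bool) \<Rightarrow> bool" where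
  "env_path adj T eta \<longleftrightarrow> (\<forall>e\<in>edges adj. \<exists>F. finite F \<and>
      (\<forall>t1 t2. 0 \<le> t1 \<longrightarrow> t1 \<le> t2 \<longrightarrow> t2 \<le> T \<longrightarrow> {t1<..t2} \<inter> F = {} \<longrightarrow> eta t1 e = eta t2 e))"

text \<open>One attempted step of the walker at time t: choose a uniform neighbour, jump iff the
  edge is open at time t.\<close>
definition step_kernel :: "('v \<Rightarrow> 'v \<Rightarrow> bool) \<Rightarrow> (real \<Rightarrow> 'v set \<Rightarrow> bool) \<Rightarrow> real \<Rightarrow> 'v \<Rightarrow> 'v \<Rightarrow> real" where
  "step_kernel adj eta t x z =
     (if z = x then 1 - real (card {w. adj x w \<and> eta t {x, w}}) / real (degree adj x)
      else if adj x z \<and> eta t {x, z} then 1 / real (degree adj x) else 0)"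

text \<open>walk_A adj eta T n s x y = integral over ordered clock times s < t1 < ... < tn < T
  of the product of step kernels from x to y (Poisson representation, without the
  factor exp(-(T-s))).\<close>
primrec walk_A :: "('v \<Rightarrow> 'v \<Rightarrow> bool) \<Rightarrow> (real \<Rightarrow> 'v set \<Rightarrow> bool) \<Rightarrow> real \<Rightarrow> nat \<Rightarrow> real \<Rightarrow> 'v \<Rightarrow> 'v \<Rightarrow> real" where
  "walk_A adj eta T 0 s x y = (if x = y then 1 else 0)"
| "walk_A adj eta T (Suc n) s x y =
     (LINT t:{s..T}|lborel. (\<Sum>z\<in>insert x {w. adj x w}. step_kernel adj eta t x z * walk_A adj eta T n t z y))"

text \<open>Quenched transition probability P^eta(X_T = y | X_0 = x); the clock is a rate-1
  Poisson process.\<close>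
definition trans_prob :: "('v \<Rightarrow> 'v \<Rightarrow> bool) \<Rightarrow> (real \<Rightarrow> 'v set \<Rightarrow> bool) \<Rightarrow> real \<Rightarrow> 'v \<Rightarrow> 'v \<Rightarrow> real" where
  "trans_prob adj eta T x y = exp (- T) * (\<Sum>n. walk_A adj eta T n 0 x y)"

definition quenched_escape :: "('v \<Rightarrow> 'v \<Rightarrow> bool) \<Rightarrow> (real \<Rightarrow> 'v set \<Rightarrow> bool) \<Rightarrow> real \<Rightarrow> 'v set \<Rightarrow> real" where
  "quenched_escape adj eta T S =
     (1 / real (card S)) * (\<Sum>x\<in>S. infsum (\<lambda>y. trans_prob adj eta T x y) (- S))"

end

(*
  Write the quenched transition probability as the Poisson series e^(-T) * sum_n A_n(x, y),
  where A_n integrates products of n one-step kernels over ordered clock times in [0, T].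
  The one-step kernel is stochastic and symmetric, so both the row sums and the column sums
  of A_n are at most T^n / n!. Split the clock times at T - 1 (Chapman-Kolmogorov). By the
  column-sum bound, each vertex w of S receives at most unit mass at time T - 1 from walkers
  started in S, and a walker at w escapes during [T - 1, T] with probability at least e^(-1)/d
  across every boundary edge at w that stays open throughout (one clock ring, choosing that
  edge). Hence at most |S| - e^(-1) K/d of the mass started in S is still in S at time T,
  where K counts these open boundary edges, and the escape probability is at least
  e^(-1) K/(d |S|) >= e^(-1) beta |dS|/(d |S|) >= beta Phi(G)/(d e).
*)

theory Submission
  imports Defs
begin

section \<open>Piecewise constant functions\<close>

definition piecewise_constant_on :: "real \<Rightarrow> real \<Rightarrow> (real \<Rightarrow> 'b) \<Rightarrow> bool" where
  "piecewise_constant_on a b f \<longleftrightarrow> (\<exists>F. finite F \<and>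
     (\<forall>t1 t2. a \<le> t1 \<longrightarrow> t1 \<le> t2 \<longrightarrow> t2 \<le> b \<longrightarrow> {t1<..t2} \<inter> F = {} \<longrightarrow> f t1 = f t2))"

lemma env_path_iff_piecewise_constant:
  "env_path adj T eta \<longleftrightarrow> (\<forall>e\<in>edges adj. piecewise_constant_on 0 T (\<lambda>t. eta t e))"
  by (simp add: env_path_def piecewise_constant_on_def)

lemma piecewise_constant_on_family:
  assumes "finite I" and "\<And>i. i \<in> I \<Longrightarrow> piecewise_constant_on a b (f i)"
    and "\<And>t1 t2. (\<forall>i\<in>I. f i t1 = f i t2) \<Longrightarrow> g t1 = g t2"
  shows "piecewise_constant_on a b g"
proof -
  have ex: "\<forall>i\<in>I. \<exists>F. finite F \<and> (\<forall>t1 t2. a \<le> t1 \<longrightarrow> t1 \<le> t2 \<longrightarrow> t2 \<le> b \<longrightarrow>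
      {t1<..t2} \<inter> F = {} \<longrightarrow> f i t1 = f i t2)"
    using assms(2) by (simp add: piecewise_constant_on_def)
  obtain F where F: "\<forall>i\<in>I. finite (F i) \<and> (\<forall>t1 t2. a \<le> t1 \<longrightarrow> t1 \<le> t2 \<longrightarrow> t2 \<le> b \<longrightarrow>
      {t1<..t2} \<inter> F i = {} \<longrightarrow> f i t1 = f i t2)"
    using bchoice[OF ex] by blast
  have "g t1 = g t2" if "a \<le> t1" "t1 \<le> t2" "t2 \<le> b" "{t1<..t2} \<inter> (\<Union>i\<in>I. F i) = {}" for t1 t2
  proof (intro assms(3) ballI)
    fix i assume "i \<in> I"
    then have "{t1<..t2} \<inter> F i = {}"
      using that(4) by blast
    then show "f i t1 = f i t2"
      using F \<open>i \<in> I\<close> that(1-3) by simp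
  qed
  moreover have "finite (\<Union>i\<in>I. F i)"
    using assms(1) F by simp
  ultimately show ?thesis
    unfolding piecewise_constant_on_def by blast
qed

lemma piecewise_constant_on_eventually_const:
  assumes "piecewise_constant_on a b f"
  obtains F where "finite F"
    and "\<And>\<tau>. \<tau> \<in> {a<..<b} - F \<Longrightarrow> \<forall>\<^sub>F t in nhds \<tau>. f t = f \<tau>"
proof -
  obtain F where F: "finite F" and const: "\<And>t1 t2. a \<le> t1 \<Longrightarrow> t1 \<le> t2 \<Longrightarrow> t2 \<le> b \<Longrightarrow>
      {t1<..t2} \<inter> F = {} \<Longrightarrow> f t1 = f t2"
    using assms unfolding piecewise_constant_on_def by blast
  have "\<forall>\<^sub>F t in nhds \<tau>. f t = f \<tau>" if \<tau>: "\<tau> \<in> {a<..<b} - F" for \<tau>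
  proof -
    obtain \<delta> where "\<delta> > 0" and \<delta>: "\<And>p. p \<in> insert a (insert b F) \<Longrightarrow> p \<noteq> \<tau> \<Longrightarrow> \<delta> \<le> dist \<tau> p"
      using finite_set_avoid[of "insert a (insert b F)" \<tau>] F by blast
    have "f t = f \<tau>" if t: "\<bar>t - \<tau>\<bar> < \<delta>" for t
    proof -
      have far: "\<delta> \<le> \<bar>p - \<tau>\<bar>" if "p \<in> insert a (insert b F)" "p \<noteq> \<tau>" for p
        using \<delta>[OF that] by (simp add: dist_real_def abs_minus_commute)
      have "a \<le> min t \<tau>" "max t \<tau> \<le> b"
        using far[of a] far[of b] \<tau> t by auto
      moreover have "{min t \<tau><..max t \<tau>} \<inter> F = {}"
        using far \<tau> t by fastforce
      ultimately show ?thesis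
        using const[of "min t \<tau>" "max t \<tau>"] by (cases "t \<le> \<tau>") auto
    qed
    then show ?thesis
      using \<open>\<delta> > 0\<close> unfolding eventually_nhds_metric dist_real_def by blast
  qed
  then show thesis using that F by blast
qed

lemma piecewise_constant_on_subinterval:
  assumes "piecewise_constant_on a b f" and "a \<le> a'" and "b' \<le> b"
  shows "piecewise_constant_on a' b' f"
  using assms unfolding piecewise_constant_on_def by (meson order_trans)

lemma piecewise_constant_on_borel_measurable:
  fixes f :: "real \<Rightarrow> real"
  assumes "piecewise_constant_on a b f"
  shows "(\<lambda>t. indicator {a..b} t * f t) \<in> borel_measurable borel"
proof -
  obtain F where F: "finite F"
    and loc: "\<And>\<tau>. \<tau> \<in> {a<..<b} - F \<Longrightarrow> \<forall>\<^sub>F t in nhds \<tau>. f t = f \<tau>"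
    using piecewise_constant_on_eventually_const[OF assms] by blast
  define g where "g t = indicator {a..b} t * f t" for t
  have "isCont g \<tau>" if \<tau>: "\<tau> \<notin> insert a (insert b F)" for \<tau>
  proof -
    have "\<forall>\<^sub>F t in nhds \<tau>. g t = g \<tau>"
    proof (cases "\<tau> \<in> {a..b}")
      case True
      then have "\<tau> \<in> {a<..<b} - F"
        using \<tau> by auto
      then have "\<forall>\<^sub>F t in nhds \<tau>. t \<in> {a<..<b}" and "\<forall>\<^sub>F t in nhds \<tau>. f t = f \<tau>"
        using eventually_nhds_in_open[OF open_greaterThanLessThan] loc by blast+
      then show ?thesis
        by eventually_elim (use \<open>\<tau> \<in> {a<..<b} - F\<close> in \<open>simp add: g_def\<close>)
    next
      case False
      have "\<forall>\<^sub>F t in nhds \<tau>. t \<in> - {a..b}"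
        using eventually_nhds_in_open[of "- {a..b}" \<tau>] False by (simp add: open_Compl)
      then show ?thesis
        by eventually_elim (use False in \<open>simp add: g_def\<close>)
    qed
    then show ?thesis
      unfolding isCont_def by (intro tendsto_eventually) (simp add: eventually_at_filter eventually_mono)
  qed
  then have "continuous_on (- insert a (insert b F)) g"
    by (intro continuous_at_imp_continuous_on) auto
  then have "g \<in> borel_measurable borel"
    using F by (intro borel_measurable_continuous_countable_exceptions) (simp_all add: countable_finite)
  then show ?thesis
    by (simp add: g_def[abs_def])
qed

section \<open>Integrals, finite sums and the exponential series\<close>

lemma set_integrable_sum:
  fixes f :: "'i \<Rightarrow> 'a \<Rightarrow> real"
  assumes "finite I" and "\<And>i. i \<in> I \<Longrightarrow> set_integrable M S (f i)"
  shows "set_integrable M S (\<lambda>x. \<Sum>i\<in>I. f i x)"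
  using assms unfolding set_integrable_def scaleR_sum_right by (intro Bochner_Integration.integrable_sum) auto

lemma set_integral_sum:
  fixes f :: "'i \<Rightarrow> 'a \<Rightarrow> real"
  assumes "finite I" and "\<And>i. i \<in> I \<Longrightarrow> set_integrable M S (f i)"
  shows "(LINT x:S|M. (\<Sum>i\<in>I. f i x)) = (\<Sum>i\<in>I. LINT x:S|M. f i x)"
  using assms unfolding set_integrable_def set_lebesgue_integral_def scaleR_sum_right
  by (intro Bochner_Integration.integral_sum) auto

lemma set_integral_atLeastAtMost_split:
  fixes f :: "real \<Rightarrow> real"
  assumes "s \<le> u" and "u \<le> T" and "set_integrable lborel {s..T} f"
  shows "(LINT x:{s..T}|lborel. f x) = (LINT x:{s..u}|lborel. f x) + (LINT x:{u..T}|lborel. f x)"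
proof -
  have "(LINT x:{s..u} \<union> {u..T}|lborel. f x) = (LINT x:{s..u}|lborel. f x) + (LINT x:{u..T}|lborel. f x)"
  proof (rule set_integral_Un_AE)
    show "AE x in lborel. \<not> (x \<in> {s..u} \<and> x \<in> {u..T})"
      using AE_lborel_singleton[of u] by eventually_elim auto
  qed (use assms in \<open>auto intro: set_integrable_subset[OF assms(3)]\<close>)
  moreover have "{s..u} \<union> {u..T} = {s..T}"
    using assms by auto
  ultimately show ?thesis
    by simp
qed

lemma set_integral_power_over_fact:
  fixes s T :: real
  assumes "s \<le> T"
  shows "(LINT \<tau>:{s..T}|lborel. (T - \<tau>)^n / fact n) = (T - s)^(Suc n) / fact (Suc n)"
proof -
  define F where "F \<tau> = - ((T - \<tau>)^(Suc n)) / fact (Suc n)" for \<tau> :: real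
  have "(F has_real_derivative (T - \<tau>)^n / fact n) (at \<tau> within {s..T})" for \<tau>
    unfolding F_def
    by (rule derivative_eq_intros refl | simp add: fact_Suc field_simps del: of_nat_Suc)+
  then have "(LINT \<tau>:{s..T}|lborel. (T - \<tau>)^n / fact n) = F T - F s"
    unfolding set_lebesgue_integral_def has_real_derivative_iff_has_vector_derivative
    by (intro integral_FTC_atLeastAtMost[OF assms]) (auto intro!: continuous_intros)
  then show ?thesis
    by (simp add: F_def)
qed

lemma power_diff_over_fact_le:
  fixes s T :: real
  assumes "0 \<le> s" and "s \<le> T"
  shows "(T - s)^n / fact n \<le> T^n"
proof -
  have "(T - s)^n / fact n \<le> (T - s)^n / 1"
    using assms by (intro divide_left_mono) (auto simp: fact_ge_1)
  also have "\<dots> \<le> T^n"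
    using assms by (simp add: power_mono)
  finally show ?thesis .
qed

lemma exp_sums_real: "(\<lambda>n. x^n / fact n) sums exp (x :: real)"
  using exp_converges[of x] by (simp add: divide_inverse mult.commute)

lemma sum_power_over_fact_le_exp:
  fixes u :: real
  assumes "0 \<le> u"
  shows "(\<Sum>j<N. u^j / fact j) \<le> exp u"
  using sum_le_suminf[OF sums_summable[OF exp_sums_real[of u]], of "{..<N}"] assms
    sums_unique[OF exp_sums_real[of u]] by auto

lemma sum_triangle_le_sum_square:
  fixes g :: "nat \<Rightarrow> nat \<Rightarrow> real"
  assumes "\<And>j m. 0 \<le> g j m"
  shows "(\<Sum>n<N. \<Sum>j\<le>n. g j (n - j)) \<le> (\<Sum>j<N. \<Sum>m<N. g j m)"
proof -
  have "(\<Sum>n<N. \<Sum>j\<le>n. g j (n - j)) = (\<Sum>(j, m)\<in>{(j, m). j + m < N}. g j m)"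
    by (rule sum.triangle_reindex[symmetric])
  also have "\<dots> \<le> (\<Sum>(j, m)\<in>{..<N} \<times> {..<N}. g j m)"
    by (rule sum_mono2) (auto simp: assms)
  also have "\<dots> = (\<Sum>j<N. \<Sum>m<N. g j m)"
    by (rule sum.cartesian_product[symmetric])
  finally show ?thesis .
qed

lemma sum_sum_mult_swap:
  fixes f :: "'w \<Rightarrow> 'a::comm_semiring_0"
  shows "(\<Sum>m\<in>M. \<Sum>w\<in>W. f w * g m w) = (\<Sum>w\<in>W. f w * (\<Sum>m\<in>M. g m w))"
  by (subst sum.swap) (simp add: sum_distrib_left)

section \<open>The walk in a dynamical environment\<close>

lemma cheeger_le:
  assumes "finite W" and "W \<noteq> {}"
  shows "cheeger adj \<le> real (card (edge_boundary adj W)) / real (\<Sum>v\<in>W. degree adj v)"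
  unfolding cheeger_def
proof (rule cInf_lower)
  show "bdd_below {real (card (edge_boundary adj W)) / real (\<Sum>v\<in>W. degree adj v) | W. finite W \<and> W \<noteq> {}}"
    by (rule bdd_belowI[where m = 0]) (auto simp del: of_nat_sum)
  show "real (card (edge_boundary adj W)) / real (\<Sum>v\<in>W. degree adj v)
      \<in> {real (card (edge_boundary adj W)) / real (\<Sum>v\<in>W. degree adj v) | W. finite W \<and> W \<noteq> {}}"
    using assms by (intro CollectI exI[of _ W]) simp
qed

primrec reachable_within :: "('v \<Rightarrow> 'v \<Rightarrow> bool) \<Rightarrow> nat \<Rightarrow> 'v \<Rightarrow> 'v set" where
  "reachable_within adj 0 x = {x}"
| "reachable_within adj (Suc n) x = (\<Union>z\<in>insert x {w. adj x w}. reachable_within adj n z)"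

locale walk_in_environment =
  fixes adj :: "'v \<Rightarrow> 'v \<Rightarrow> bool" and d :: nat
    and eta :: "real \<Rightarrow> 'v set \<Rightarrow> bool" and T0 :: real
  assumes simple: "simple_graph adj" and locally_finite: "locally_finite adj"
    and regular: "\<forall>v. degree adj v = d" and d_pos: "d > 0"
    and env: "env_path adj T0 eta" and T0_nonneg: "0 \<le> T0"
begin

abbreviation K :: "real \<Rightarrow> 'v \<Rightarrow> 'v \<Rightarrow> real" where "K \<equiv> step_kernel adj eta"
abbreviation A :: "real \<Rightarrow> nat \<Rightarrow> real \<Rightarrow> 'v \<Rightarrow> 'v \<Rightarrow> real" where "A \<equiv> walk_A adj eta"
abbreviation P :: "'v \<Rightarrow> 'v \<Rightarrow> real" where "P \<equiv> trans_prob adj eta T0"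
abbreviation nbhd :: "'v \<Rightarrow> 'v set" where "nbhd x \<equiv> insert x {w. adj x w}"

lemma adj_sym: "adj x y \<Longrightarrow> adj y x"
  using simple by (auto simp: simple_graph_def)

lemma adj_irrefl: "\<not> adj x x"
  using simple by (auto simp: simple_graph_def)

lemma finite_neighbours [simp]: "finite {w. adj x w}"
  using locally_finite by (auto simp: locally_finite_def)

lemma card_neighbours: "card {w. adj x w} = d"
  using regular by (auto simp: degree_def)

lemma step_kernel_eq: "K t x z =
    (if z = x then 1 - real (card {w. adj x w \<and> eta t {x, w}}) / real d
     else if adj x z \<and> eta t {x, z} then 1 / real d else 0)"
  using regular by (simp add: step_kernel_def)

lemma step_kernel_nonneg: "0 \<le> K t x z"
proof -
  have "card {w. adj x w \<and> eta t {x, w}} \<le> card {w. adj x w}"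
    by (rule card_mono) auto
  then show ?thesis
    using d_pos by (auto simp: step_kernel_eq card_neighbours field_simps)
qed

lemma step_kernel_eq_0: "z \<notin> nbhd x \<Longrightarrow> K t x z = 0"
  by (simp add: step_kernel_eq)

lemma step_kernel_sym: "K t x z = K t z x"
  by (cases "z = x") (auto simp: step_kernel_eq insert_commute intro: adj_sym)

lemma sum_step_kernel_nbhd: "(\<Sum>z\<in>nbhd x. K t x z) = 1"
proof -
  have "(\<Sum>z\<in>{w. adj x w}. K t x z) = (\<Sum>z\<in>{w. adj x w}. if eta t {x, z} then 1 / real d else 0)"
    using adj_irrefl by (intro sum.cong) (auto simp: step_kernel_eq)
  also have "\<dots> = (\<Sum>z\<in>{w. adj x w \<and> eta t {x, w}}. 1 / real d)"
    by (simp add: sum.inter_filter[symmetric] conj_commute)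
  finally show ?thesis
    using adj_irrefl[of x] by (simp add: step_kernel_eq[of t x x])
qed

lemma sum_step_kernel_superset: "finite B \<Longrightarrow> nbhd x \<subseteq> B \<Longrightarrow> (\<Sum>z\<in>B. K t x z * h z) = (\<Sum>z\<in>nbhd x. K t x z * h z)"
  by (rule sum.mono_neutral_right) (auto simp: step_kernel_eq_0)

lemma sum_step_kernel_le_1: "finite X \<Longrightarrow> (\<Sum>z\<in>X. K t x z) \<le> 1"
proof -
  assume "finite X"
  then have "(\<Sum>z\<in>X. K t x z) = (\<Sum>z\<in>X \<inter> nbhd x. K t x z)"
    by (intro sum.mono_neutral_right) (auto simp: step_kernel_eq_0)
  also have "\<dots> \<le> (\<Sum>z\<in>nbhd x. K t x z)"
    by (rule sum_mono2) (auto simp: step_kernel_nonneg)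
  finally show ?thesis
    by (simp add: sum_step_kernel_nbhd)
qed

lemma step_kernel_le_1: "K t x z \<le> 1"
  using sum_step_kernel_le_1[of "{z}" t x] by simp

lemma finite_reachable_within: "finite (reachable_within adj n x)"
  by (induction n arbitrary: x) auto

lemma reachable_within_nbhd_subset:
  "z \<in> nbhd x \<Longrightarrow> reachable_within adj n z \<subseteq> reachable_within adj (Suc n) x"
  by auto

lemma walk_A_eq_0: "y \<notin> reachable_within adj n x \<Longrightarrow> A T n s x y = 0"
proof (induction n arbitrary: x s)
  case (Suc n)
  then have "\<And>t. (\<Sum>z\<in>nbhd x. K t x z * A T n t z y) = 0"
    by (intro sum.neutral) auto
  then show ?case
    by simp
qed simp

lemma walk_A_nonneg: "0 \<le> A T n s x y"
proof (induction n arbitrary: x s)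
  case (Suc n)
  have "0 \<le> (\<Sum>z\<in>nbhd x. K t x z * A T n t z y)" for t
    using Suc step_kernel_nonneg by (intro sum_nonneg) auto
  then show ?case
    unfolding walk_A.simps set_lebesgue_integral_def
    by (intro integral_nonneg_AE) (auto simp: indicator_def)
qed simp

lemma step_kernel_piecewise_constant: "piecewise_constant_on 0 T0 (\<lambda>t. K t x z)"
proof (rule piecewise_constant_on_family[where I = "{w. adj x w}" and f = "\<lambda>w t. eta t {x, w}"])
  show "piecewise_constant_on 0 T0 (\<lambda>t. eta t {x, w})" if "w \<in> {w. adj x w}" for w
    using env that unfolding env_path_iff_piecewise_constant edges_def by blast
  show "K t1 x z = K t2 x z" if open_eq: "\<forall>w\<in>{w. adj x w}. eta t1 {x, w} = eta t2 {x, w}" for t1 t2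
  proof -
    have "{w. adj x w \<and> eta t1 {x, w}} = {w. adj x w \<and> eta t2 {x, w}}"
      using open_eq by auto
    then show ?thesis
      using open_eq by (auto simp: step_kernel_eq)
  qed
qed simp

lemma step_kernel_measurable:
  assumes "T \<le> T0"
  shows "(\<lambda>t. indicator {0..T} t * K t x z) \<in> borel_measurable borel"
  using assms
  by (intro piecewise_constant_on_borel_measurable piecewise_constant_on_subinterval[OF step_kernel_piecewise_constant]) auto

lemma walk_A_measurable:
  assumes T: "T \<le> T0"
  shows "(\<lambda>t. indicator {0..T} t * A T n t x y) \<in> borel_measurable borel"
proof (induction n arbitrary: x y)
  case (Suc n)
  define h where "h \<tau> = indicator {0..T} \<tau> * (\<Sum>z\<in>nbhd x. K \<tau> x z * A T n \<tau> z y)" for \<tau>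
  have "h = (\<lambda>\<tau>. \<Sum>z\<in>nbhd x. (indicator {0..T} \<tau> * K \<tau> x z) * (indicator {0..T} \<tau> * A T n \<tau> z y))"
    unfolding h_def sum_distrib_left by (intro ext sum.cong) (auto simp: indicator_def)
  then have "h \<in> borel_measurable borel"
    by (simp only:) (intro borel_measurable_sum borel_measurable_times step_kernel_measurable[OF T] Suc)
  then have "(\<lambda>(t, \<tau>). indicator {t..T} \<tau> * h \<tau>) \<in> borel_measurable (borel \<Otimes>\<^sub>M lborel)"
  proof -
    have "(\<lambda>(t, \<tau>). indicator {t..T} \<tau> * h \<tau>) = (\<lambda>p. (if fst p \<le> snd p \<and> snd p \<le> T then 1 else 0) * h (snd p))"
      by (auto simp: indicator_def fun_eq_iff)
    also have "\<dots> \<in> borel_measurable (borel \<Otimes>\<^sub>M lborel)"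
      using \<open>h \<in> borel_measurable borel\<close> by measurable
    finally show ?thesis .
  qed
  then have "(\<lambda>t. \<integral>\<tau>. indicator {t..T} \<tau> * h \<tau> \<partial>lborel) \<in> borel_measurable borel"
    using lborel.borel_measurable_lebesgue_integral by simp
  moreover have "(\<lambda>t. indicator {0..T} t * A T (Suc n) t x y) =
      (\<lambda>t. indicator {0..T} t * (\<integral>\<tau>. indicator {t..T} \<tau> * h \<tau> \<partial>lborel))"
    unfolding walk_A.simps set_lebesgue_integral_def h_def
    by (intro ext) (auto simp: indicator_def intro!: Bochner_Integration.integral_cong)
  ultimately show ?case
    by simp
qed simp

lemma set_integrable_step_kernel_walk_A_bounded:
  assumes T: "T \<le> T0" and s: "0 \<le> s" and B: "finite B"
    and bound: "\<And>\<tau> z. 0 \<le> \<tau> \<Longrightarrow> \<tau> \<le> T \<Longrightarrow> \<bar>A T n \<tau> z y\<bar> \<le> C"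
  shows "set_integrable lborel {s..T} (\<lambda>\<tau>. \<Sum>z\<in>B. K \<tau> x z * A T n \<tau> z y)"
  unfolding set_integrable_def
proof (rule integrableI_bounded_set[where A = "{s..T}" and B = "real (card B) * C"])
  have "(\<lambda>\<tau>. indicator {s..T} \<tau> * (\<Sum>z\<in>B. (indicator {0..T} \<tau> * K \<tau> x z) * (indicator {0..T} \<tau> * A T n \<tau> z y)))
      \<in> borel_measurable borel"
    using step_kernel_measurable[OF T] walk_A_measurable[OF T] by simp
  moreover have "indicator {s..T} \<tau> * (\<Sum>z\<in>B. (indicator {0..T} \<tau> * K \<tau> x z) * (indicator {0..T} \<tau> * A T n \<tau> z y))
      = indicator {s..T} \<tau> *\<^sub>R (\<Sum>z\<in>B. K \<tau> x z * A T n \<tau> z y)" for \<tau>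
    using s by (auto simp: indicator_def)
  ultimately show "(\<lambda>\<tau>. indicator {s..T} \<tau> *\<^sub>R (\<Sum>z\<in>B. K \<tau> x z * A T n \<tau> z y)) \<in> borel_measurable lborel"
    by simp
  have "\<bar>\<Sum>z\<in>B. K \<tau> x z * A T n \<tau> z y\<bar> \<le> real (card B) * C" if "\<tau> \<in> {s..T}" for \<tau>
  proof -
    have "\<bar>K \<tau> x z * A T n \<tau> z y\<bar> \<le> C" for z
    proof -
      have "K \<tau> x z * \<bar>A T n \<tau> z y\<bar> \<le> \<bar>A T n \<tau> z y\<bar>"
        by (rule mult_left_le_one_le) (auto simp: step_kernel_nonneg step_kernel_le_1)
      then show ?thesis
        using bound[of \<tau> z] that s by (simp add: abs_mult step_kernel_nonneg)
    qed
    then have "(\<Sum>z\<in>B. \<bar>K \<tau> x z * A T n \<tau> z y\<bar>) \<le> real (card B) * C"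
      by (rule sum_bounded_above)
    then show ?thesis
      by (rule order_trans[OF sum_abs])
  qed
  then show "AE \<tau> in lborel. \<tau> \<in> {s..T} \<longrightarrow> norm (indicator {s..T} \<tau> *\<^sub>R (\<Sum>z\<in>B. K \<tau> x z * A T n \<tau> z y)) \<le> real (card B) * C"
    by simp
qed (auto simp: emeasure_lborel_Icc_eq)

lemma sum_walk_A_reachable:
  assumes "T \<le> T0" and "0 \<le> s" and "s \<le> T" and "finite Y" and "reachable_within adj n x \<subseteq> Y"
  shows "(\<Sum>y\<in>Y. A T n s x y) = (T - s)^n / fact n"
  using assms(2-)
proof (induction n arbitrary: s x Y)
  case (Suc n)
  have bound: "\<bar>A T n \<tau> z y\<bar> \<le> T^n" if "0 \<le> \<tau>" "\<tau> \<le> T" for \<tau> z y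
  proof (cases "y \<in> reachable_within adj n z")
    case True
    have "A T n \<tau> z y \<le> (\<Sum>y'\<in>reachable_within adj n z. A T n \<tau> z y')"
      using True by (intro member_le_sum) (auto simp: walk_A_nonneg finite_reachable_within)
    also have "\<dots> = (T - \<tau>)^n / fact n"
      using Suc.IH that by (simp add: finite_reachable_within)
    also have "\<dots> \<le> T^n"
      using that by (rule power_diff_over_fact_le)
    finally show ?thesis
      using walk_A_nonneg[of T n \<tau> z y] by simp
  qed (use that in \<open>simp add: walk_A_eq_0\<close>)
  have integrable: "set_integrable lborel {s..T} (\<lambda>\<tau>. \<Sum>z\<in>nbhd x. K \<tau> x z * A T n \<tau> z y)" for y
    using Suc.prems bound by (intro set_integrable_step_kernel_walk_A_bounded[OF assms(1)]) auto
  have "(\<Sum>y\<in>Y. A T (Suc n) s x y) = (LINT \<tau>:{s..T}|lborel. (\<Sum>y\<in>Y. \<Sum>z\<in>nbhd x. K \<tau> x z * A T n \<tau> z y))"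
    using Suc.prems integrable by (simp add: set_integral_sum)
  also have "\<dots> = (LINT \<tau>:{s..T}|lborel. (T - \<tau>)^n / fact n)"
  proof (intro set_lebesgue_integral_cong allI impI)
    fix \<tau> assume \<tau>: "\<tau> \<in> {s..T}"
    have "(\<Sum>y\<in>Y. \<Sum>z\<in>nbhd x. K \<tau> x z * A T n \<tau> z y) = (\<Sum>z\<in>nbhd x. K \<tau> x z * (\<Sum>y\<in>Y. A T n \<tau> z y))"
      by (subst sum.swap) (simp add: sum_distrib_left)
    also have "\<dots> = (\<Sum>z\<in>nbhd x. K \<tau> x z * ((T - \<tau>)^n / fact n))"
      using Suc.prems \<tau> by (intro sum.cong refl) (subst Suc.IH, auto)
    also have "\<dots> = (T - \<tau>)^n / fact n"
      by (simp only: sum_distrib_right[symmetric] sum_step_kernel_nbhd mult_1)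
    finally show "(\<Sum>y\<in>Y. \<Sum>z\<in>nbhd x. K \<tau> x z * A T n \<tau> z y) = (T - \<tau>)^n / fact n" .
  qed simp
  also have "\<dots> = (T - s)^(Suc n) / fact (Suc n)"
    using Suc.prems by (intro set_integral_power_over_fact) simp
  finally show ?case .
qed simp

lemma sum_walk_A_le:
  assumes "T \<le> T0" and "0 \<le> s" and "s \<le> T" and "finite Y"
  shows "(\<Sum>y\<in>Y. A T n s x y) \<le> (T - s)^n / fact n"
proof -
  have "(\<Sum>y\<in>Y. A T n s x y) \<le> (\<Sum>y\<in>Y \<union> reachable_within adj n x. A T n s x y)"
    using assms by (intro sum_mono2) (auto simp: finite_reachable_within walk_A_nonneg)
  also have "\<dots> = (T - s)^n / fact n"
    using assms by (intro sum_walk_A_reachable) (auto simp: finite_reachable_within)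
  finally show ?thesis .
qed

lemma walk_A_le:
  assumes "T \<le> T0" and "0 \<le> s" and "s \<le> T"
  shows "A T n s x y \<le> (T - s)^n / fact n"
  using sum_walk_A_le[OF assms, of "{y}"] by simp

lemma set_integrable_step_kernel_walk_A:
  assumes "T \<le> T0" and "0 \<le> s" and "finite B"
  shows "set_integrable lborel {s..T} (\<lambda>\<tau>. \<Sum>z\<in>B. K \<tau> x z * A T n \<tau> z y)"
proof (rule set_integrable_step_kernel_walk_A_bounded[OF assms])
  fix \<tau> z assume "0 \<le> \<tau>" "\<tau> \<le> T"
  then have "A T n \<tau> z y \<le> T^n"
    using walk_A_le[OF assms(1)] power_diff_over_fact_le by (meson order_trans)
  then show "\<bar>A T n \<tau> z y\<bar> \<le> T^n"
    using walk_A_nonneg[of T n \<tau> z y] by simp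
qed

lemma sum_walk_A_column_le:
  assumes "T \<le> T0" and "0 \<le> s" and "s \<le> T" and "finite X"
  shows "(\<Sum>x\<in>X. A T n s x w) \<le> (T - s)^n / fact n"
  using assms(2-)
proof (induction n arbitrary: s X)
  case 0
  then show ?case
    by (simp add: sum.delta)
next
  case (Suc n)
  define B where "B = (\<Union>x\<in>X. nbhd x)"
  have B: "finite B"
    using Suc.prems by (auto simp: B_def)
  have integrable: "set_integrable lborel {s..T} (\<lambda>\<tau>. \<Sum>z\<in>nbhd x. K \<tau> x z * A T n \<tau> z w)" for x
    using Suc.prems by (intro set_integrable_step_kernel_walk_A[OF assms(1)]) auto
  have "(\<Sum>x\<in>X. A T (Suc n) s x w) = (LINT \<tau>:{s..T}|lborel. (\<Sum>x\<in>X. \<Sum>z\<in>nbhd x. K \<tau> x z * A T n \<tau> z w))"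
    using Suc.prems(3) integrable by (simp only: walk_A.simps set_integral_sum)
  also have "\<dots> \<le> (LINT \<tau>:{s..T}|lborel. (T - \<tau>)^n / fact n)"
  proof (rule set_integral_mono)
    show "set_integrable lborel {s..T} (\<lambda>\<tau>. \<Sum>x\<in>X. \<Sum>z\<in>nbhd x. K \<tau> x z * A T n \<tau> z w)"
      using Suc.prems(3) integrable by (rule set_integrable_sum)
    show "set_integrable lborel {s..T} (\<lambda>\<tau>. (T - \<tau>)^n / fact n)"
      by (intro borel_integrable_atLeastAtMost' continuous_intros) simp
    fix \<tau> assume \<tau>: "\<tau> \<in> {s..T}"
    have "(\<Sum>x\<in>X. \<Sum>z\<in>nbhd x. K \<tau> x z * A T n \<tau> z w) = (\<Sum>x\<in>X. \<Sum>z\<in>B. K \<tau> x z * A T n \<tau> z w)"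
      using B by (intro sum.cong refl sum_step_kernel_superset[symmetric]) (auto simp: B_def)
    also have "\<dots> = (\<Sum>z\<in>B. (\<Sum>x\<in>X. K \<tau> z x) * A T n \<tau> z w)"
      by (subst sum.swap) (simp add: sum_distrib_right step_kernel_sym)
    also have "\<dots> \<le> (\<Sum>z\<in>B. A T n \<tau> z w)"
      using Suc.prems
      by (intro sum_mono mult_left_le_one_le sum_step_kernel_le_1 sum_nonneg step_kernel_nonneg walk_A_nonneg)
    also have "\<dots> \<le> (T - \<tau>)^n / fact n"
      using Suc.prems \<tau> B by (intro Suc.IH) auto
    finally show "(\<Sum>x\<in>X. \<Sum>z\<in>nbhd x. K \<tau> x z * A T n \<tau> z w) \<le> (T - \<tau>)^n / fact n" .
  qed
  also have "\<dots> = (T - s)^(Suc n) / fact (Suc n)"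
    using Suc.prems by (intro set_integral_power_over_fact) simp
  finally show ?case .
qed

lemma sum_walk_A_0_mult: "finite W \<Longrightarrow> x \<in> W \<Longrightarrow> (\<Sum>w\<in>W. A T 0 s x w * f w) = f x"
  by (simp add: if_distrib[of "\<lambda>c. c * _"] cong: if_cong)

lemma walk_A_split:
  assumes "T \<le> T0" and "u \<le> T" and "0 \<le> s" and "s \<le> u" and "finite W"
    and "\<forall>j\<le>n. reachable_within adj j x \<subseteq> W"
  shows "A T n s x y = (\<Sum>j\<le>n. \<Sum>w\<in>W. A u j s x w * A T (n - j) u w y)"
  using assms(3-)
proof (induction n arbitrary: s x y)
  case 0
  then show ?case
    by (simp add: sum_walk_A_0_mult del: walk_A.simps) simp
next
  case (Suc n)
  define g where "g \<tau> = (\<Sum>z\<in>nbhd x. K \<tau> x z * A T n \<tau> z y)" for \<tau>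
  have "A T (Suc n) s x y = (LINT \<tau>:{s..u}|lborel. g \<tau>) + (LINT \<tau>:{u..T}|lborel. g \<tau>)"
    using Suc.prems assms(1,2) unfolding walk_A.simps g_def
    by (intro set_integral_atLeastAtMost_split set_integrable_step_kernel_walk_A) auto
  also have "(LINT \<tau>:{u..T}|lborel. g \<tau>) = (\<Sum>w\<in>W. A u 0 s x w * A T (Suc n - 0) u w y)"
    using Suc.prems(3) spec[OF Suc.prems(4), of 0] unfolding g_def walk_A.simps(2)[symmetric]
    by (simp add: sum_walk_A_0_mult del: walk_A.simps)
  also have "(LINT \<tau>:{s..u}|lborel. g \<tau>) =
      (LINT \<tau>:{s..u}|lborel. (\<Sum>j\<le>n. \<Sum>w\<in>W. A T (n - j) u w y * (\<Sum>z\<in>nbhd x. K \<tau> x z * A u j \<tau> z w)))"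
  proof (intro set_lebesgue_integral_cong allI impI)
    fix \<tau> assume \<tau>: "\<tau> \<in> {s..u}"
    have "g \<tau> = (\<Sum>z\<in>nbhd x. K \<tau> x z * (\<Sum>j\<le>n. \<Sum>w\<in>W. A u j \<tau> z w * A T (n - j) u w y))"
      unfolding g_def
    proof (intro sum.cong refl arg_cong[where f = "\<lambda>c. _ * c"] Suc.IH)
      fix z assume "z \<in> nbhd x"
      then show "\<forall>j\<le>n. reachable_within adj j z \<subseteq> W"
        using Suc.prems(4) reachable_within_nbhd_subset by (meson Suc_le_mono order_trans)
    qed (use \<tau> Suc.prems in auto)
    then show "g \<tau> = (\<Sum>j\<le>n. \<Sum>w\<in>W. A T (n - j) u w y * (\<Sum>z\<in>nbhd x. K \<tau> x z * A u j \<tau> z w))"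
      by (simp add: sum_distrib_left mult_ac sum.swap[of _ "nbhd x"])
  qed simp
  also have "\<dots> = (\<Sum>j\<le>n. \<Sum>w\<in>W. A u (Suc j) s x w * A T (Suc n - Suc j) u w y)"
    using Suc.prems assms(1,2)
    by (simp add: set_integral_sum set_integrable_sum set_integrable_step_kernel_walk_A mult.commute)
  finally show ?case
    unfolding sum.atMost_Suc_shift by linarith
qed

section \<open>Transition probabilities\<close>

lemma summable_walk_A:
  assumes "T \<le> T0" and "0 \<le> s" and "s \<le> T"
  shows "summable (\<lambda>n. A T n s x y)"
  using assms walk_A_le walk_A_nonneg
  by (intro summable_comparison_test[OF _ sums_summable[OF exp_sums_real[of "T - s"]]]) auto

lemma summable_walk_A_T0: "summable (\<lambda>n. A T0 n 0 x y)"
  using T0_nonneg by (intro summable_walk_A) auto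

lemma sum_trans_prob: "(\<Sum>y\<in>Y. P x y) = exp (- T0) * (\<Sum>n. \<Sum>y\<in>Y. A T0 n 0 x y)"
  by (simp add: trans_prob_def sum_distrib_left suminf_sum summable_walk_A_T0)

lemma trans_prob_nonneg: "0 \<le> P x y"
  unfolding trans_prob_def
  by (intro mult_nonneg_nonneg suminf_nonneg summable_walk_A_T0) (auto simp: walk_A_nonneg)

lemma sum_trans_prob_le_1:
  assumes "finite Y"
  shows "(\<Sum>y\<in>Y. P x y) \<le> 1"
proof -
  have "(\<Sum>n. \<Sum>y\<in>Y. A T0 n 0 x y) \<le> (\<Sum>n. T0^n / fact n)"
    using assms T0_nonneg sum_walk_A_le[of T0 0 Y]
    by (intro suminf_le summable_sum summable_walk_A_T0 sums_summable[OF exp_sums_real]) auto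
  then have "exp (- T0) * (\<Sum>n. \<Sum>y\<in>Y. A T0 n 0 x y) \<le> exp (- T0) * exp T0"
    using sums_unique[OF exp_sums_real[of T0]] by simp
  then show ?thesis
    by (simp add: sum_trans_prob mult_exp_exp)
qed

lemma sum_trans_prob_ge:
  assumes "finite Y" and "\<forall>n<N. reachable_within adj n x \<subseteq> Y"
  shows "exp (- T0) * (\<Sum>n<N. T0^n / fact n) \<le> (\<Sum>y\<in>Y. P x y)"
proof -
  have "(\<Sum>n<N. T0^n / fact n) = (\<Sum>n<N. \<Sum>y\<in>Y. A T0 n 0 x y)"
    using assms T0_nonneg sum_walk_A_reachable[of T0 0 Y _ x] by (intro sum.cong) auto
  also have "\<dots> \<le> (\<Sum>n. \<Sum>y\<in>Y. A T0 n 0 x y)"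
    by (intro sum_le_suminf summable_sum summable_walk_A_T0) (auto intro: sum_nonneg walk_A_nonneg)
  finally show ?thesis
    by (simp add: sum_trans_prob)
qed

lemma infsum_trans_prob_compl_ge:
  assumes S: "finite S"
  shows "1 - (\<Sum>y\<in>S. P x y) \<le> infsum (P x) (- S)"
proof -
  have summable: "P x summable_on - S"
    using trans_prob_nonneg sum_trans_prob_le_1
    by (intro nonneg_bdd_above_summable_on bdd_aboveI[where M = 1]) auto
  define Y where "Y N = S \<union> (\<Union>n<N. reachable_within adj n x)" for N
  have Y: "finite (Y N)" for N
    using S by (simp add: Y_def finite_reachable_within)
  have "exp (- T0) * (\<Sum>n<N. T0^n / fact n) - (\<Sum>y\<in>S. P x y) \<le> infsum (P x) (- S)" for N
  proof -
    have "exp (- T0) * (\<Sum>n<N. T0^n / fact n) \<le> (\<Sum>y\<in>Y N. P x y)"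
      using Y by (intro sum_trans_prob_ge) (auto simp: Y_def)
    also have "\<dots> = (\<Sum>y\<in>S. P x y) + (\<Sum>y\<in>Y N - S. P x y)"
      using Y S by (subst sum.subset_diff[of S]) (auto simp: Y_def)
    also have "(\<Sum>y\<in>Y N - S. P x y) = infsum (P x) (Y N - S)"
      using Y by simp
    also have "\<dots> \<le> infsum (P x) (- S)"
      using Y summable trans_prob_nonneg by (intro infsum_mono_neutral) auto
    finally show ?thesis
      by simp
  qed
  moreover have "(\<lambda>N. exp (- T0) * (\<Sum>n<N. T0^n / fact n) - (\<Sum>y\<in>S. P x y))
      \<longlonglongrightarrow> exp (- T0) * exp T0 - (\<Sum>y\<in>S. P x y)"
    using exp_sums_real[of T0] unfolding sums_def by (intro tendsto_intros)
  ultimately show ?thesis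
    by (simp add: exp_minus LIMSEQ_le_const2)
qed

section \<open>Escape through open boundary edges\<close>

definition open_exits :: "'v set \<Rightarrow> 'v \<Rightarrow> 'v set" where
  "open_exits S w = {y. adj w y \<and> y \<notin> S \<and> (\<forall>t\<in>{T0 - 1..T0}. eta t {w, y})}"

text \<open>A lower bound for the mass that a walker started at w at time T0 - 1 carries out of S
  by time T0: all of it if w lies outside S, otherwise the jumps across edges that stay open
  throughout.\<close>

definition exit_weight :: "'v set \<Rightarrow> 'v \<Rightarrow> real" where
  "exit_weight S w = (if w \<in> S then real (card (open_exits S w)) / real d else 1)"

lemma finite_open_exits: "finite (open_exits S w)"
  by (rule finite_subset[of _ "{y. adj w y}"]) (auto simp: open_exits_def)

lemma card_open_boundary:
  assumes "finite S"
  shows "card {e\<in>edge_boundary adj S. \<forall>t\<in>{T0 - 1..T0}. eta t e} = (\<Sum>w\<in>S. card (open_exits S w))"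
proof -
  have card_pairs: "card (Sigma S (open_exits S)) = (\<Sum>w\<in>S. card (open_exits S w))"
    using assms finite_open_exits by (simp add: card_SigmaI)
  have "inj_on (\<lambda>(w, y). {w, y}) (Sigma S (open_exits S))"
    by (auto simp: inj_on_def open_exits_def doubleton_eq_iff)
  moreover have "(\<lambda>(w, y). {w, y}) ` Sigma S (open_exits S) = {e\<in>edge_boundary adj S. \<forall>t\<in>{T0 - 1..T0}. eta t e}"
  proof
    show "(\<lambda>(w, y). {w, y}) ` Sigma S (open_exits S) \<subseteq> {e\<in>edge_boundary adj S. \<forall>t\<in>{T0 - 1..T0}. eta t e}"
      by (auto simp: open_exits_def edge_boundary_def) blast
    show "{e\<in>edge_boundary adj S. \<forall>t\<in>{T0 - 1..T0}. eta t e} \<subseteq> (\<lambda>(w, y). {w, y}) ` Sigma S (open_exits S)"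
    proof
      fix e assume e: "e \<in> {e\<in>edge_boundary adj S. \<forall>t\<in>{T0 - 1..T0}. eta t e}"
      then obtain x y where xy: "e = {x, y}" "adj x y" "x \<in> S" "y \<notin> S"
        by (auto simp: edge_boundary_def)
      then have "(x, y) \<in> Sigma S (open_exits S)"
        using e by (auto simp: open_exits_def)
      then show "e \<in> (\<lambda>(w, y). {w, y}) ` Sigma S (open_exits S)"
        by (rule rev_image_eqI) (simp add: xy(1))
    qed
  qed
  ultimately show ?thesis
    using card_pairs card_image by fastforce
qed

lemma exit_weight_le_1: "exit_weight S w \<le> 1"
proof -
  have "card (open_exits S w) \<le> card {y. adj w y}"
    by (rule card_mono) (auto simp: open_exits_def)
  then show ?thesis
    using d_pos by (simp add: exit_weight_def card_neighbours divide_le_eq)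
qed

lemma walk_A_one_open_exit:
  assumes "y \<in> open_exits S w"
  shows "A T0 1 (T0 - 1) w y = 1 / real d"
proof -
  have "adj w y" and "y \<noteq> w" and "\<forall>t\<in>{T0 - 1..T0}. eta t {w, y}"
    using assms adj_irrefl by (auto simp: open_exits_def)
  then have integrand: "(\<Sum>z\<in>nbhd w. K \<tau> w z * A T0 0 \<tau> z y) = 1 / real d" if "\<tau> \<in> {T0 - 1..T0}" for \<tau>
    using that by (simp add: if_distrib[of "\<lambda>c. _ * c"] sum.delta step_kernel_eq cong: if_cong)
  have "A T0 1 (T0 - 1) w y = (LINT \<tau>:{T0 - 1..T0}|lborel. (\<Sum>z\<in>nbhd w. K \<tau> w z * A T0 0 \<tau> z y))"
    by (simp only: One_nat_def walk_A.simps(2))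
  also have "\<dots> = (LINT \<tau>:{T0 - 1..T0}|lborel. 1 / real d)"
    using integrand by (intro set_lebesgue_integral_cong) auto
  finally show ?thesis
    by (simp add: set_integral_const)
qed

lemma sum_walk_A_inside:
  assumes "T \<le> T0" and "0 \<le> s" and "s \<le> T" and "finite S"
  shows "(\<Sum>y\<in>S. A T m s w y) = (T - s)^m / fact m - (\<Sum>y\<in>reachable_within adj m w - S. A T m s w y)"
proof -
  have "(\<Sum>y\<in>S \<union> (reachable_within adj m w - S). A T m s w y) = (T - s)^m / fact m"
    using assms by (intro sum_walk_A_reachable) (auto simp: finite_reachable_within)
  moreover have "(\<Sum>y\<in>S \<union> (reachable_within adj m w - S). A T m s w y)
      = (\<Sum>y\<in>S. A T m s w y) + (\<Sum>y\<in>reachable_within adj m w - S. A T m s w y)"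
    using assms by (intro sum.union_disjoint) (auto simp: finite_reachable_within)
  ultimately show ?thesis
    by simp
qed

lemma exit_weight_le_escaped:
  assumes "1 \<le> T0"
  shows "exit_weight S w \<le> (\<Sum>m<2. \<Sum>y\<in>reachable_within adj m w - S. A T0 m (T0 - 1) w y)"
proof (cases "w \<in> S")
  case True
  have "exit_weight S w = (\<Sum>y\<in>open_exits S w. A T0 1 (T0 - 1) w y)"
    using True walk_A_one_open_exit by (simp add: exit_weight_def)
  also have "\<dots> \<le> (\<Sum>y\<in>reachable_within adj 1 w - S. A T0 1 (T0 - 1) w y)"
    by (intro sum_mono2 walk_A_nonneg) (auto simp: finite_reachable_within open_exits_def)
  finally show ?thesis
    using True by (simp add: numeral_2_eq_2)
next
  case False
  have "0 \<le> (\<Sum>y\<in>reachable_within adj 1 w - S. A T0 1 (T0 - 1) w y)"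
    by (intro sum_nonneg walk_A_nonneg)
  then show ?thesis
    using False by (simp add: numeral_2_eq_2 exit_weight_def insert_Diff_if del: walk_A.simps(2))
qed

lemma suminf_walk_A_stay_le:
  assumes "1 \<le> T0" and S: "finite S"
  shows "(\<Sum>m. \<Sum>y\<in>S. A T0 m (T0 - 1) w y) \<le> exp 1 - exit_weight S w"
proof -
  define c where "c m = (\<Sum>y\<in>reachable_within adj m w - S. A T0 m (T0 - 1) w y)" for m
  have stay: "(\<Sum>y\<in>S. A T0 m (T0 - 1) w y) = 1 / fact m - c m" for m
    using sum_walk_A_inside[of T0 "T0 - 1" S m w] assms by (simp add: c_def)
  have c_nonneg: "0 \<le> c m" for m
    unfolding c_def by (intro sum_nonneg walk_A_nonneg)
  have summable_fact: "summable (\<lambda>m. 1 / fact m :: real)"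
    using sums_summable[OF exp_sums_real[of 1]] by simp
  have stay_nonneg: "0 \<le> (\<Sum>y\<in>S. A T0 m (T0 - 1) w y)" for m
    by (intro sum_nonneg walk_A_nonneg)
  have "c m \<le> 1 / fact m" for m
    using stay[of m] stay_nonneg[of m] by linarith
  then have summable_c: "summable c"
    using c_nonneg by (intro summable_comparison_test[OF _ summable_fact]) auto
  have "(\<Sum>m<2. c m) \<le> (\<Sum>m. c m)"
    using c_nonneg by (intro sum_le_suminf summable_c) auto
  then have "exit_weight S w \<le> (\<Sum>m. c m)"
    using exit_weight_le_escaped[OF assms(1), of S w] unfolding c_def[symmetric] by linarith
  moreover have "(\<Sum>m. \<Sum>y\<in>S. A T0 m (T0 - 1) w y) = exp 1 - (\<Sum>m. c m)"
    using suminf_diff[OF summable_fact summable_c] sums_unique[OF exp_sums_real[of 1]]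
    by (simp add: stay)
  ultimately show ?thesis
    by simp
qed

lemma sum_walk_A_exit_weight_le:
  assumes "1 \<le> T0" and S: "finite S" and W: "finite W" "S \<subseteq> W"
    and reach: "\<forall>x\<in>S. reachable_within adj j x \<subseteq> W"
  shows "(\<Sum>x\<in>S. \<Sum>w\<in>W. A (T0 - 1) j 0 x w * (exp 1 - exit_weight S w))
    \<le> (T0 - 1)^j / fact j * (exp 1 * real (card S) - (\<Sum>w\<in>S. exit_weight S w))"
proof -
  define a where "a x w = A (T0 - 1) j 0 x w" for x w
  define q where "q = (T0 - 1)^j / fact j"
  have row: "(\<Sum>w\<in>W. a x w * (exp 1 - exit_weight S w)) = (exp 1 - 1) * q + (\<Sum>w\<in>S. a x w * (1 - exit_weight S w))"
    if "x \<in> S" for x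
  proof -
    have "(\<Sum>w\<in>W. a x w) = q"
      using sum_walk_A_reachable[of "T0 - 1" 0 W j x] assms that unfolding a_def q_def by auto
    moreover have "(\<Sum>w\<in>W. a x w * (1 - exit_weight S w)) = (\<Sum>w\<in>S. a x w * (1 - exit_weight S w))"
      using W by (intro sum.mono_neutral_right) (auto simp: exit_weight_def)
    moreover have "(\<Sum>w\<in>W. a x w * (exp 1 - exit_weight S w))
        = (exp 1 - 1) * (\<Sum>w\<in>W. a x w) + (\<Sum>w\<in>W. a x w * (1 - exit_weight S w))"
      by (simp add: sum_distrib_left sum.distrib[symmetric] algebra_simps)
    ultimately show ?thesis
      by simp
  qed
  have column: "(\<Sum>x\<in>S. a x w) \<le> q" for w
    using sum_walk_A_column_le[of "T0 - 1" 0 S j w] assms unfolding a_def q_def by auto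
  have "(\<Sum>x\<in>S. \<Sum>w\<in>W. a x w * (exp 1 - exit_weight S w))
      = (exp 1 - 1) * q * real (card S) + (\<Sum>x\<in>S. \<Sum>w\<in>S. a x w * (1 - exit_weight S w))"
    by (simp add: row sum.distrib)
  also have "\<dots> = (exp 1 - 1) * q * real (card S) + (\<Sum>w\<in>S. (1 - exit_weight S w) * (\<Sum>x\<in>S. a x w))"
    by (subst sum.swap) (simp add: sum_distrib_right mult.commute)
  also have "\<dots> \<le> (exp 1 - 1) * q * real (card S) + (\<Sum>w\<in>S. (1 - exit_weight S w) * q)"
    using column exit_weight_le_1 by (intro add_left_mono sum_mono mult_left_mono) auto
  also have "\<dots> = q * (exp 1 * real (card S) - (\<Sum>w\<in>S. exit_weight S w))"
    by (simp add: algebra_simps sum_subtractf sum_distrib_left)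
  finally show ?thesis
    by (simp add: a_def q_def)
qed

lemma sum_walk_A_stay_split_le:
  assumes "0 \<le> u" and "u \<le> T0" and "finite S" and "finite W"
    and "\<forall>x\<in>S. \<forall>j<N. reachable_within adj j x \<subseteq> W"
  shows "(\<Sum>n<N. \<Sum>x\<in>S. \<Sum>y\<in>S. A T0 n 0 x y)
    \<le> (\<Sum>j<N. \<Sum>x\<in>S. \<Sum>w\<in>W. A u j 0 x w * (\<Sum>m<N. \<Sum>y\<in>S. A T0 m u w y))"
proof -
  define a where "a j x w = A u j 0 x w" for j x w
  define b where "b m w = (\<Sum>y\<in>S. A T0 m u w y)" for m w
  have a_nonneg: "0 \<le> a j x w" and b_nonneg: "0 \<le> b m w" for j x w m
    by (auto simp: a_def b_def walk_A_nonneg intro: sum_nonneg)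
  have "(\<Sum>n<N. \<Sum>x\<in>S. \<Sum>y\<in>S. A T0 n 0 x y) = (\<Sum>x\<in>S. \<Sum>n<N. \<Sum>j\<le>n. \<Sum>w\<in>W. a j x w * b (n - j) w)"
  proof (subst sum.swap, intro sum.cong refl)
    fix x n assume "x \<in> S" "n \<in> {..<N}"
    then have "A T0 n 0 x y = (\<Sum>j\<le>n. \<Sum>w\<in>W. a j x w * A T0 (n - j) u w y)" for y
      using assms unfolding a_def by (intro walk_A_split) auto
    then have "(\<Sum>y\<in>S. A T0 n 0 x y) = (\<Sum>y\<in>S. \<Sum>j\<le>n. \<Sum>w\<in>W. a j x w * A T0 (n - j) u w y)"
      by simp
    also have "\<dots> = (\<Sum>j\<le>n. \<Sum>w\<in>W. a j x w * b (n - j) w)"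
      unfolding b_def by (subst sum.swap) (simp only: sum_sum_mult_swap)
    finally show "(\<Sum>y\<in>S. A T0 n 0 x y) = (\<Sum>j\<le>n. \<Sum>w\<in>W. a j x w * b (n - j) w)" .
  qed
  also have "\<dots> \<le> (\<Sum>x\<in>S. \<Sum>j<N. \<Sum>m<N. \<Sum>w\<in>W. a j x w * b m w)"
    by (intro sum_mono sum_triangle_le_sum_square sum_nonneg mult_nonneg_nonneg a_nonneg b_nonneg)
  also have "\<dots> = (\<Sum>j<N. \<Sum>x\<in>S. \<Sum>w\<in>W. a j x w * (\<Sum>m<N. b m w))"
    by (subst sum.swap) (simp only: sum_sum_mult_swap)
  finally show ?thesis
    by (simp add: a_def b_def)
qed

lemma sum_exit_weight_le_card: "(\<Sum>w\<in>S. exit_weight S w) \<le> real (card S)"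
  using sum_bounded_above[of S "exit_weight S" 1] exit_weight_le_1 by simp

lemma partial_sum_walk_A_stay_le:
  assumes "1 \<le> T0" and S: "finite S"
  shows "(\<Sum>n<N. \<Sum>x\<in>S. \<Sum>y\<in>S. A T0 n 0 x y)
    \<le> exp (T0 - 1) * (exp 1 * real (card S) - (\<Sum>w\<in>S. exit_weight S w))"
proof -
  define W where "W = S \<union> (\<Union>x\<in>S. \<Union>j<N. reachable_within adj j x)"
  define D where "D = exp 1 * real (card S) - (\<Sum>w\<in>S. exit_weight S w)"
  have W: "finite W" "S \<subseteq> W" "\<forall>x\<in>S. \<forall>j<N. reachable_within adj j x \<subseteq> W"
    using S by (auto simp: W_def finite_reachable_within)
  have "(\<Sum>n<N. \<Sum>x\<in>S. \<Sum>y\<in>S. A T0 n 0 x y)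
      \<le> (\<Sum>j<N. \<Sum>x\<in>S. \<Sum>w\<in>W. A (T0 - 1) j 0 x w * (\<Sum>m<N. \<Sum>y\<in>S. A T0 m (T0 - 1) w y))"
    using assms W by (intro sum_walk_A_stay_split_le) auto
  also have "\<dots> \<le> (\<Sum>j<N. \<Sum>x\<in>S. \<Sum>w\<in>W. A (T0 - 1) j 0 x w * (exp 1 - exit_weight S w))"
  proof (intro sum_mono mult_left_mono walk_A_nonneg)
    fix w
    have "(\<Sum>m<N. \<Sum>y\<in>S. A T0 m (T0 - 1) w y) \<le> (\<Sum>m. \<Sum>y\<in>S. A T0 m (T0 - 1) w y)"
      using assms by (intro sum_le_suminf summable_sum summable_walk_A) (auto intro: sum_nonneg walk_A_nonneg)
    then show "(\<Sum>m<N. \<Sum>y\<in>S. A T0 m (T0 - 1) w y) \<le> exp 1 - exit_weight S w"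
      using suminf_walk_A_stay_le[OF assms, of w] by linarith
  qed
  also have "\<dots> \<le> (\<Sum>j<N. (T0 - 1)^j / fact j * D)"
    using assms W unfolding D_def by (intro sum_mono sum_walk_A_exit_weight_le) auto
  also have "\<dots> \<le> exp (T0 - 1) * D"
  proof -
    have "real (card S) \<le> exp 1 * real (card S)"
      using mult_right_mono[of 1 "exp 1" "real (card S)"] by simp
    then have "0 \<le> D"
      using sum_exit_weight_le_card[of S] unfolding D_def by linarith
    moreover have "(\<Sum>j<N. (T0 - 1)^j / fact j) \<le> exp (T0 - 1)"
      using assms by (intro sum_power_over_fact_le_exp) simp
    ultimately show ?thesis
      unfolding sum_distrib_right[symmetric] by (rule mult_right_mono[rotated])
  qed
  finally show ?thesis
    by (simp add: D_def)
qed

lemma sum_trans_prob_stay_le: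
  assumes "1 \<le> T0" and "finite S"
  shows "(\<Sum>x\<in>S. \<Sum>y\<in>S. P x y) \<le> real (card S) - exp (-1) * (\<Sum>w\<in>S. exit_weight S w)"
proof -
  have "(\<Sum>x\<in>S. \<Sum>y\<in>S. P x y) = exp (- T0) * (\<Sum>n. \<Sum>x\<in>S. \<Sum>y\<in>S. A T0 n 0 x y)"
    by (simp add: sum_trans_prob sum_distrib_left suminf_sum summable_sum summable_walk_A_T0)
  also have "\<dots> \<le> exp (- T0) * (exp (T0 - 1) * (exp 1 * real (card S) - (\<Sum>w\<in>S. exit_weight S w)))"
    using assms
    by (intro mult_left_mono suminf_le_const summable_sum summable_walk_A_T0 partial_sum_walk_A_stay_le) auto
  also have "\<dots> = real (card S) - exp (-1) * (\<Sum>w\<in>S. exit_weight S w)"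
    by (simp add: right_diff_distrib mult.assoc[symmetric] mult_exp_exp)
  finally show ?thesis .
qed

lemma quenched_escape_ge:
  assumes "1 \<le> T0" and S: "finite S" "S \<noteq> {}"
  shows "exp (-1) * real (card {e\<in>edge_boundary adj S. \<forall>t\<in>{T0 - 1..T0}. eta t e}) / (real d * real (card S))
    \<le> quenched_escape adj eta T0 S"
proof -
  have "exp (-1) * (\<Sum>w\<in>S. exit_weight S w) \<le> real (card S) - (\<Sum>x\<in>S. \<Sum>y\<in>S. P x y)"
    using sum_trans_prob_stay_le[OF assms(1,2)] by simp
  also have "\<dots> = (\<Sum>x\<in>S. 1 - (\<Sum>y\<in>S. P x y))"
    by (simp add: sum_subtractf)
  also have "\<dots> \<le> (\<Sum>x\<in>S. infsum (P x) (- S))"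
    using S by (intro sum_mono infsum_trans_prob_compl_ge)
  finally have "exp (-1) * (\<Sum>w\<in>S. exit_weight S w) / real (card S) \<le> quenched_escape adj eta T0 S"
    using S by (simp add: quenched_escape_def divide_right_mono)
  moreover have "(\<Sum>w\<in>S. exit_weight S w) = real (card {e\<in>edge_boundary adj S. \<forall>t\<in>{T0 - 1..T0}. eta t e}) / real d"
    using S by (simp add: card_open_boundary exit_weight_def sum_divide_distrib)
  ultimately show ?thesis
    by (simp add: field_simps)
qed

lemma quenched_escape_ge_cheeger:
  assumes "1 \<le> T0" and S: "finite S" "S \<noteq> {}" and "0 \<le> \<beta>"
    and open_boundary: "\<beta> * real (card (edge_boundary adj S))
      \<le> real (card {e\<in>edge_boundary adj S. \<forall>t\<in>{T0 - 1..T0}. eta t e})"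
  shows "\<beta> / (real d * exp 1) * cheeger adj \<le> quenched_escape adj eta T0 S"
proof -
  define B where "B = real (card (edge_boundary adj S))"
  have "cheeger adj \<le> B / (real d * real (card S))"
    using cheeger_le[OF S, of adj] regular by (simp add: B_def mult.commute)
  then have "\<beta> / (real d * exp 1) * cheeger adj \<le> \<beta> / (real d * exp 1) * (B / (real d * real (card S)))"
    using \<open>0 \<le> \<beta>\<close> by (intro mult_left_mono) auto
  also have "\<dots> = exp (-1) * (\<beta> * B) / (real d * real (card S)) / real d"
    by (simp add: exp_minus field_simps)
  also have "\<dots> \<le> exp (-1) * (\<beta> * B) / (real d * real (card S))"
    using divide_left_mono[of 1 "real d" "exp (-1) * (\<beta> * B) / (real d * real (card S))"] d_pos \<open>0 \<le> \<beta>\<close>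
    by (simp add: B_def)
  also have "\<dots> \<le> exp (-1) * real (card {e\<in>edge_boundary adj S. \<forall>t\<in>{T0 - 1..T0}. eta t e}) / (real d * real (card S))"
    using open_boundary by (intro divide_right_mono mult_left_mono) (auto simp: B_def)
  also have "\<dots> \<le> quenched_escape adj eta T0 S"
    using assms(1) S by (rule quenched_escape_ge)
  finally show ?thesis .
qed

end

theorem mainTheorem19:
  fixes adj :: "'v \<Rightarrow> 'v \<Rightarrow> bool" and d :: nat and S :: "'v set"
    and p \<mu> \<beta> :: real and eta :: "real \<Rightarrow> 'v set \<Rightarrow> bool"
  assumes "simple_graph adj" and "connected_graph adj" and "locally_finite adj"
    and "nonamenable adj" and "vertex_transitive adj"
    and "\<forall>v. degree adj v = d" and "d \<ge> 3"
    and "finite S" and "S \<noteq> {}"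
    and "0 < p" and "p \<le> 1"
    and "0 < \<mu>" and "\<mu> \<le> 1/2"
    and "env_path adj (1/\<mu>) eta"
    and "\<beta> > 0"
    and "real (card {e\<in>edge_boundary adj S. \<forall>t\<in>{1/\<mu> - 1 .. 1/\<mu>}. eta t e})
           \<ge> \<beta> * real (card (edge_boundary adj S))"
  shows "quenched_escape adj eta (1/\<mu>) S \<ge> \<beta> / (real d * exp 1) * cheeger adj"
proof -
  have "2 \<le> 1 / \<mu>"
    using assms(12,13) by (simp add: field_simps)
  then interpret walk_in_environment adj d eta "1/\<mu>"
    using assms by unfold_locales auto
  show ?thesis
    using assms(8,9,15,16) \<open>2 \<le> 1 / \<mu>\<close> by (intro quenched_escape_ge_cheeger) auto
qed

end
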